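(* Let $\mathcal{F}(X)\subseteq\Psi$ with admissible topology $\Delta$, and suppose there is a base $\beta$ for the topology of $X$ with $U^+=\{A\in\Psi:A\subseteq U\}\in\Delta$ for every $U\in\beta$. Then $(X,\mathbb{F})$ is weakly mixing of all orders if and only if $(\Psi,\overline{\mathbb{F}})$ is weakly mixing of all orders.
   Context: $(X,d)$ compact metric, $\mathbb{F}=(f_n)$ continuous self-maps, $\omega_n=f_n\circ\cdots\circ f_1$. Weak mixing of order $k$: for any non-empty open $U_1,\dots,U_k,V_1,\dots,V_k$ there is $n$ with $\omega_n(U_i)\cap V_i\neq\emptyset$ for all $i$. $\mathcal{F}(X)$: non-empty finite subsets; $\Psi\subseteq\mathcal{K}(X)$ invariant under all $\omega_k$; induced system $\overline{\omega}_k(A)=\omega_k(A)$, notions defined analogously on $(\Psi,\Delta)$. Admissible topology: hit-and-miss or hit-and-far-miss type topology with $x\mapsto\{x\}$ continuous, generated by $U^-=\{A:A\cap U\neq\emptyset\}$ and miss sets $(E^c)^+$ or $(E^c)^{++}$ for $E$ in a fixed family of closed sets; induced maps continuous. *)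

theory Defs
  imports "HOL-Analysis.Analysis"
begin

text \<open>Nonautonomous system: maps f 1, f 2, ... (f 0 is unused);
  omega f n = f n o ... o f 1, with omega f 0 = id.\<close>
fun omega :: "(nat \<Rightarrow> 'a \<Rightarrow> 'a) \<Rightarrow> nat \<Rightarrow> 'a \<Rightarrow> 'a" where
  "omega f 0 = id"
| "omega f (Suc n) = f (Suc n) \<circ> omega f n"

definition weakly_mixing_order :: "'b topology \<Rightarrow> (nat \<Rightarrow> 'b \<Rightarrow> 'b) \<Rightarrow> nat \<Rightarrow> bool" where
  "weakly_mixing_order T g k \<longleftrightarrow>
     (\<forall>U V. (\<forall>i<k. openin T (U i) \<and> U i \<noteq> {} \<and> openin T (V i) \<and> V i \<noteq> {}) \<longrightarrow>
        (\<exists>n\<ge>1. \<forall>i<k. g n ` (U i) \<inter> V i \<noteq> {}))"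

definition weakly_mixing_all_orders :: "'b topology \<Rightarrow> (nat \<Rightarrow> 'b \<Rightarrow> 'b) \<Rightarrow> bool" where
  "weakly_mixing_all_orders T g \<longleftrightarrow> (\<forall>k\<ge>1. weakly_mixing_order T g k)"

definition hit_set :: "'a set set \<Rightarrow> 'a set \<Rightarrow> 'a set set" where
  "hit_set \<Psi> U = {A \<in> \<Psi>. A \<inter> U \<noteq> {}}"

definition miss_set :: "'a set set \<Rightarrow> 'a set \<Rightarrow> 'a set set" where
  "miss_set \<Psi> U = {A \<in> \<Psi>. A \<subseteq> U}"

definition far_miss_set :: "'a::metric_space set set \<Rightarrow> 'a set \<Rightarrow> 'a set set" where
  "far_miss_set \<Psi> U = {A \<in> \<Psi>. \<exists>e>0. (\<Union>a\<in>A. ball a e) \<subseteq> U}"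

definition hit_miss_topology :: "bool \<Rightarrow> 'a::metric_space set set \<Rightarrow> 'a set set \<Rightarrow> 'a set topology" where
  "hit_miss_topology far \<Psi> \<E> = topology_generated_by
     ({hit_set \<Psi> U | U. open U} \<union>
      {(if far then far_miss_set \<Psi> (- E) else miss_set \<Psi> (- E)) | E. E \<in> \<E>})"

definition admissible_topology ::
  "(nat \<Rightarrow> 'a::metric_space \<Rightarrow> 'a) \<Rightarrow> 'a set set \<Rightarrow> 'a set topology \<Rightarrow> bool" where
  "admissible_topology f \<Psi> \<Delta> \<longleftrightarrow>
     (\<exists>far \<E>. (\<forall>E\<in>\<E>. closed E) \<and> \<Delta> = hit_miss_topology far \<Psi> \<E>) \<and>
     continuous_map euclidean \<Delta> (\<lambda>x. {x}) \<and>
     (\<forall>n. continuous_map \<Delta> \<Delta> (\<lambda>A. omega f n ` A))"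

end

theory Submission
  imports Defs
begin

text \<open>
  Hit sets of open sets and miss sets of basic sets are Delta-open, which makes the backward
  direction immediate: a set inside a basic W \<subseteq> U whose image meets V yields a point of U
  mapped into V.

  For the forward direction, Delta need not be the Hausdorff-metric topology, but each Delta-open
  set still contains every finite set that is Hausdorff-close enough to one of its members. So
  pick members A i, B i of the given open sets and finite nets of them, and apply weak mixing of
  X, of order the number of pairs of net points, to small balls around these pairs: one time n
  sends a finite set G i close to A i onto a finite set close to B i, for every i at once.
\<close>

subsection \<open>Hausdorff closeness\<close>

definition hausdorff_close :: "real \<Rightarrow> 'a::metric_space set \<Rightarrow> 'a set \<Rightarrow> bool" where
  "hausdorff_close e A B \<longleftrightarrow>
     (\<forall>x\<in>A. \<exists>y\<in>B. dist x y < e) \<and> (\<forall>y\<in>B. \<exists>x\<in>A. dist x y < e)"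

lemma hausdorff_close_mono: "hausdorff_close e A B \<Longrightarrow> e \<le> e' \<Longrightarrow> hausdorff_close e' A B"
  unfolding hausdorff_close_def by (meson less_le_trans)

lemma hausdorff_close_trans:
  assumes "hausdorff_close d A B" "hausdorff_close e B C"
  shows "hausdorff_close (d + e) A C"
  unfolding hausdorff_close_def
proof (intro conjI ballI)
  fix x assume "x \<in> A"
  then obtain y where "y \<in> B" "dist x y < d" using assms(1) by (auto simp: hausdorff_close_def)
  then obtain z where "z \<in> C" "dist y z < e" using assms(2) by (auto simp: hausdorff_close_def)
  with \<open>dist x y < d\<close> show "\<exists>z\<in>C. dist x z < d + e"
    by (meson add_strict_mono dist_triangle le_less_trans)
next
  fix z assume "z \<in> C"
  then obtain y where "y \<in> B" "dist y z < e" using assms(2) by (auto simp: hausdorff_close_def)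
  then obtain x where "x \<in> A" "dist x y < d" using assms(1) by (auto simp: hausdorff_close_def)
  with \<open>dist y z < e\<close> show "\<exists>x\<in>A. dist x z < d + e"
    by (meson add_strict_mono dist_triangle le_less_trans)
qed

lemma hausdorff_close_image:
  assumes "p ` I = A" "\<forall>j\<in>I. dist (p j) (h j) < e"
  shows "hausdorff_close e A (h ` I)"
  using assms unfolding hausdorff_close_def by blast

lemma compact_hausdorff_close_finite_subset:
  fixes C :: "'a::metric_space set"
  assumes "compact C" "C \<noteq> {}" "e > 0"
  obtains F where "finite F" "F \<noteq> {}" "F \<subseteq> C" "hausdorff_close e C F"
proof -
  obtain F where F: "finite F" "F \<subseteq> C" "C \<subseteq> (\<Union>x\<in>F. ball x e)"
    using seq_compact_imp_totally_bounded[OF compact_imp_seq_compact[OF assms(1)]] assms(3)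
    by meson
  have "hausdorff_close e C F"
    unfolding hausdorff_close_def
  proof (intro conjI ballI)
    fix x assume "x \<in> C"
    then show "\<exists>y\<in>F. dist x y < e" using F(3) by (force simp: dist_commute)
  next
    fix y assume "y \<in> F"
    then show "\<exists>x\<in>C. dist x y < e" using F(2) \<open>e > 0\<close> by force
  qed
  moreover have "F \<noteq> {}" using F(3) assms(2) by blast
  ultimately show thesis using that F by blast
qed

subsection \<open>Open sets of the hyperspace seen from finite sets\<close>

definition finite_hausdorff_open :: "'a::metric_space set set \<Rightarrow> 'a set set \<Rightarrow> bool" where
  "finite_hausdorff_open \<Psi> W \<longleftrightarrow> W \<subseteq> \<Psi> \<and>
     (\<forall>A\<in>W. \<exists>e>0. \<forall>G. finite G \<longrightarrow> G \<noteq> {} \<longrightarrow> hausdorff_close e A G \<longrightarrow> G \<in> W)"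

lemma finite_hausdorff_openE:
  assumes "finite_hausdorff_open \<Psi> W" "A \<in> W"
  obtains e where "e > 0" "\<And>G. finite G \<Longrightarrow> G \<noteq> {} \<Longrightarrow> hausdorff_close e A G \<Longrightarrow> G \<in> W"
  using assms unfolding finite_hausdorff_open_def by metis

lemma finite_hausdorff_open_Int:
  assumes "finite_hausdorff_open \<Psi> W" "finite_hausdorff_open \<Psi> W'"
  shows "finite_hausdorff_open \<Psi> (W \<inter> W')"
  unfolding finite_hausdorff_open_def
proof (intro conjI ballI)
  show "W \<inter> W' \<subseteq> \<Psi>" using assms by (auto simp: finite_hausdorff_open_def)
  fix A assume "A \<in> W \<inter> W'"
  then obtain e e' where "e > 0" "e' > 0"
    and e: "\<And>G. finite G \<Longrightarrow> G \<noteq> {} \<Longrightarrow> hausdorff_close e A G \<Longrightarrow> G \<in> W"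
    and e': "\<And>G. finite G \<Longrightarrow> G \<noteq> {} \<Longrightarrow> hausdorff_close e' A G \<Longrightarrow> G \<in> W'"
    using finite_hausdorff_openE[OF assms(1)] finite_hausdorff_openE[OF assms(2)] by (metis IntD1 IntD2)
  show "\<exists>e>0. \<forall>G. finite G \<longrightarrow> G \<noteq> {} \<longrightarrow> hausdorff_close e A G \<longrightarrow> G \<in> W \<inter> W'"
  proof (intro exI[of _ "min e e'"] conjI allI impI)
    fix G assume "finite G" "G \<noteq> {}" "hausdorff_close (min e e') A G"
    then show "G \<in> W \<inter> W'"
      using e e' hausdorff_close_mono[of "min e e'" A G] by simp
  qed (simp add: \<open>e > 0\<close> \<open>e' > 0\<close>)
qed

lemma finite_hausdorff_open_Union:
  "(\<And>W. W \<in> \<W> \<Longrightarrow> finite_hausdorff_open \<Psi> W) \<Longrightarrow> finite_hausdorff_open \<Psi> (\<Union>\<W>)"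
  unfolding finite_hausdorff_open_def by (meson UnionE UnionI Union_least)

lemma finite_hausdorff_open_hit_set:
  assumes finite_in: "\<And>G. G \<noteq> {} \<Longrightarrow> finite G \<Longrightarrow> G \<in> \<Psi>" and "open U"
  shows "finite_hausdorff_open \<Psi> (hit_set \<Psi> U)"
  unfolding finite_hausdorff_open_def
proof (intro conjI ballI)
  fix A assume "A \<in> hit_set \<Psi> U"
  then obtain x where "x \<in> A" "x \<in> U" by (auto simp: hit_set_def)
  then obtain e where "e > 0" "ball x e \<subseteq> U" using \<open>open U\<close> open_contains_ball by blast
  moreover have "G \<inter> U \<noteq> {}" if "hausdorff_close e A G" "ball x e \<subseteq> U" for G
    using that \<open>x \<in> A\<close> unfolding hausdorff_close_def by fastforce
  ultimately show "\<exists>e>0. \<forall>G. finite G \<longrightarrow> G \<noteq> {} \<longrightarrow> hausdorff_close e A G \<longrightarrow> G \<in> hit_set \<Psi> U"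
    using finite_in by (auto simp: hit_set_def)
qed (auto simp: hit_set_def)

text \<open>A uniform margin around A inside U exists by compactness for miss sets and by definition
  for far-miss sets; it survives passing to a Hausdorff-close set.\<close>

lemma hausdorff_close_margin:
  assumes "(\<Union>x\<in>A. ball x e) \<subseteq> U" "hausdorff_close (e / 2) A G"
  shows "(\<Union>y\<in>G. ball y (e / 2)) \<subseteq> U"
proof
  fix z assume "z \<in> (\<Union>y\<in>G. ball y (e / 2))"
  then obtain y where "y \<in> G" "dist y z < e / 2" by auto
  then obtain x where "x \<in> A" "dist x y < e / 2" using assms(2) by (auto simp: hausdorff_close_def)
  then have "z \<in> ball x e" using \<open>dist y z < e / 2\<close> dist_triangle[of x z y] by simp
  then show "z \<in> U" using assms(1) \<open>x \<in> A\<close> by blast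
qed

lemma finite_hausdorff_open_far_miss_set:
  assumes finite_in: "\<And>G. G \<noteq> {} \<Longrightarrow> finite G \<Longrightarrow> G \<in> \<Psi>"
  shows "finite_hausdorff_open \<Psi> (far_miss_set \<Psi> U)"
  unfolding finite_hausdorff_open_def
proof (intro conjI ballI)
  fix A assume "A \<in> far_miss_set \<Psi> U"
  then obtain d where "d > 0" "(\<Union>x\<in>A. ball x d) \<subseteq> U"
    by (auto simp: far_miss_set_def)
  moreover have "G \<in> far_miss_set \<Psi> U"
    if "finite G" "G \<noteq> {}" "(\<Union>y\<in>G. ball y (d / 2)) \<subseteq> U" for G
  proof -
    have "d / 2 > 0" using \<open>d > 0\<close> by simp
    then show ?thesis using that finite_in unfolding far_miss_set_def by blast
  qed
  ultimately show "\<exists>e>0. \<forall>G. finite G \<longrightarrow> G \<noteq> {} \<longrightarrow> hausdorff_close e A G \<longrightarrow> G \<in> far_miss_set \<Psi> U"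
    using hausdorff_close_margin by (metis half_gt_zero)
qed (auto simp: far_miss_set_def)

lemma finite_hausdorff_open_miss_set:
  assumes finite_in: "\<And>G. G \<noteq> {} \<Longrightarrow> finite G \<Longrightarrow> G \<in> \<Psi>"
    and compact: "\<And>A. A \<in> \<Psi> \<Longrightarrow> compact A" and "open U"
  shows "finite_hausdorff_open \<Psi> (miss_set \<Psi> U)"
  unfolding finite_hausdorff_open_def
proof (intro conjI ballI)
  fix A assume "A \<in> miss_set \<Psi> U"
  then have "compact A" "A \<subseteq> U" using compact by (auto simp: miss_set_def)
  then obtain d where "d > 0" "(\<Union>x\<in>A. ball x d) \<subseteq> U"
    using compact_subset_open_imp_ball_epsilon_subset \<open>open U\<close> by metis
  moreover have "G \<in> miss_set \<Psi> U"
    if "finite G" "G \<noteq> {}" "(\<Union>y\<in>G. ball y (d / 2)) \<subseteq> U" for G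
  proof -
    have "G \<subseteq> (\<Union>y\<in>G. ball y (d / 2))" using \<open>d > 0\<close> by force
    then show ?thesis using that finite_in by (auto simp: miss_set_def)
  qed
  ultimately show "\<exists>e>0. \<forall>G. finite G \<longrightarrow> G \<noteq> {} \<longrightarrow> hausdorff_close e A G \<longrightarrow> G \<in> miss_set \<Psi> U"
    using hausdorff_close_margin by (metis half_gt_zero)
qed (auto simp: miss_set_def)

lemma finite_hausdorff_open_hit_miss_topology:
  assumes finite_in: "\<And>G. G \<noteq> {} \<Longrightarrow> finite G \<Longrightarrow> G \<in> \<Psi>"
    and compact: "\<And>A. A \<in> \<Psi> \<Longrightarrow> compact A" and closed: "\<forall>E\<in>\<E>. closed E"
    and "openin (hit_miss_topology far \<Psi> \<E>) W"
  shows "finite_hausdorff_open \<Psi> W"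
proof -
  have "generate_topology_on ({hit_set \<Psi> U | U. open U} \<union>
     {(if far then far_miss_set \<Psi> (- E) else miss_set \<Psi> (- E)) | E. E \<in> \<E>}) W"
    using assms(4) unfolding hit_miss_topology_def openin_topology_generated_by_iff .
  then show ?thesis
  proof (induction rule: generate_topology_on.induct)
    case Empty
    show ?case by (simp add: finite_hausdorff_open_def)
  next
    case (Int a b)
    show ?case using Int.IH by (rule finite_hausdorff_open_Int)
  next
    case (UN K)
    show ?case using UN.IH by (rule finite_hausdorff_open_Union)
  next
    case (Basis s)
    then consider (hit) U where "open U" "s = hit_set \<Psi> U"
      | (miss) E where "E \<in> \<E>" "s = miss_set \<Psi> (- E)"
      | (far) E where "s = far_miss_set \<Psi> (- E)"
      by (cases far) auto
    then show ?case
    proof cases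
      case hit
      then show ?thesis using finite_hausdorff_open_hit_set finite_in by blast
    next
      case miss
      then show ?thesis
        using finite_hausdorff_open_miss_set[OF finite_in compact] closed by (simp add: open_Compl)
    next
      case far
      then show ?thesis using finite_hausdorff_open_far_miss_set finite_in by blast
    qed
  qed
qed

lemma openin_hit_set_hit_miss_topology:
  "open U \<Longrightarrow> openin (hit_miss_topology far \<Psi> \<E>) (hit_set \<Psi> U)"
  unfolding hit_miss_topology_def openin_topology_generated_by_iff
  by (rule generate_topology_on.Basis) blast

lemma weakly_mixing_orderD:
  assumes "weakly_mixing_order X g k"
    and "\<And>i. i < k \<Longrightarrow> openin X (U i) \<and> U i \<noteq> {} \<and> openin X (V i) \<and> V i \<noteq> {}"
  shows "\<exists>n\<ge>1. \<forall>i<k. g n ` U i \<inter> V i \<noteq> {}"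
  using assms unfolding weakly_mixing_order_def by blast

lemma weakly_mixing_all_orders_finite_family:
  assumes wm: "weakly_mixing_all_orders X g" and "finite T"
    and opens: "\<And>t. t \<in> T \<Longrightarrow> openin X (U t) \<and> U t \<noteq> {} \<and> openin X (V t) \<and> V t \<noteq> {}"
  obtains n where "n \<ge> 1" "\<And>t. t \<in> T \<Longrightarrow> g n ` U t \<inter> V t \<noteq> {}"
proof (cases "T = {}")
  case True
  then show thesis using that[of 1] by simp
next
  case False
  obtain h where h: "bij_betw h {..<card T} T"
    using ex_bij_betw_nat_finite[OF \<open>finite T\<close>] lessThan_atLeast0 by metis
  have "card T \<ge> 1" using False \<open>finite T\<close> by (simp add: Suc_le_eq card_gt_0_iff)
  then have wm_T: "weakly_mixing_order X g (card T)"
    using wm unfolding weakly_mixing_all_orders_def by blast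
  have opens_h: "openin X ((U \<circ> h) j) \<and> (U \<circ> h) j \<noteq> {} \<and> openin X ((V \<circ> h) j) \<and> (V \<circ> h) j \<noteq> {}"
    if "j < card T" for j
    using opens bij_betwE[OF h] that by simp
  obtain n where "n \<ge> 1" and n: "\<forall>j<card T. g n ` (U \<circ> h) j \<inter> (V \<circ> h) j \<noteq> {}"
    using weakly_mixing_orderD[of X g "card T" "U \<circ> h" "V \<circ> h", OF wm_T opens_h] by blast
  show thesis
  proof (rule that[OF \<open>n \<ge> 1\<close>])
    fix t assume "t \<in> T"
    then obtain j where "j < card T" "t = h j"
      using bij_betw_imp_surj_on[OF h] by (metis imageE lessThan_iff)
    then show "g n ` U t \<inter> V t \<noteq> {}" using n by simp
  qed
qed

lemma weakly_mixing_all_orders_approx_pairs: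
  fixes g :: "nat \<Rightarrow> 'a::metric_space \<Rightarrow> 'a"
  assumes wm: "weakly_mixing_all_orders euclidean g" and "finite T"
    and pos: "\<And>t. t \<in> T \<Longrightarrow> \<rho> t > 0"
  obtains n x where "n \<ge> 1" "\<And>t. t \<in> T \<Longrightarrow> dist (a t) (x t) < \<rho> t \<and> dist (b t) (g n (x t)) < \<rho> t"
proof -
  obtain n where "n \<ge> 1" and hit: "\<And>t. t \<in> T \<Longrightarrow> g n ` ball (a t) (\<rho> t) \<inter> ball (b t) (\<rho> t) \<noteq> {}"
    by (rule weakly_mixing_all_orders_finite_family[OF wm \<open>finite T\<close>,
          where U = "\<lambda>t. ball (a t) (\<rho> t)" and V = "\<lambda>t. ball (b t) (\<rho> t)"])
      (auto dest: pos)
  have "\<forall>t\<in>T. \<exists>y. dist (a t) y < \<rho> t \<and> dist (b t) (g n y) < \<rho> t"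
    using hit by fastforce
  then show thesis using that[OF \<open>n \<ge> 1\<close>] by metis
qed

lemma weakly_mixing_all_orders_hausdorff_approx:
  fixes g :: "nat \<Rightarrow> 'a::metric_space \<Rightarrow> 'a" and e :: "nat \<Rightarrow> real"
  assumes wm: "weakly_mixing_all_orders euclidean g"
    and AB: "\<And>i. i < k \<Longrightarrow> compact (A i) \<and> A i \<noteq> {} \<and> compact (B i) \<and> B i \<noteq> {} \<and> e i > 0"
  obtains n G where "n \<ge> 1" "\<And>i. i < k \<Longrightarrow> finite (G i) \<and> G i \<noteq> {} \<and>
      hausdorff_close (e i) (A i) (G i) \<and> hausdorff_close (e i) (B i) (g n ` G i)"
proof -
  define r where "r i = e i / 2" for i
  have r: "r i > 0" if "i < k" for i using AB[OF that] by (simp add: r_def)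
  have "\<forall>i<k. \<exists>F. finite F \<and> F \<noteq> {} \<and> hausdorff_close (r i) (A i) F"
    using AB r by (metis compact_hausdorff_close_finite_subset)
  then obtain FA where FA: "\<And>i. i < k \<Longrightarrow> finite (FA i) \<and> FA i \<noteq> {} \<and> hausdorff_close (r i) (A i) (FA i)"
    by metis
  have "\<forall>i<k. \<exists>F. finite F \<and> F \<noteq> {} \<and> hausdorff_close (r i) (B i) F"
    using AB r by (metis compact_hausdorff_close_finite_subset)
  then obtain FB where FB: "\<And>i. i < k \<Longrightarrow> finite (FB i) \<and> FB i \<noteq> {} \<and> hausdorff_close (r i) (B i) (FB i)"
    by metis
  define T where "T = (SIGMA i:{..<k}. FA i \<times> FB i)"
  have "finite T" using FA FB by (auto simp: T_def intro!: finite_SigmaI)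
  moreover have "r (fst t) > 0" if "t \<in> T" for t using that r by (auto simp: T_def)
  ultimately obtain n x where "n \<ge> 1" and x: "\<And>t. t \<in> T \<Longrightarrow>
      dist (fst (snd t)) (x t) < r (fst t) \<and> dist (snd (snd t)) (g n (x t)) < r (fst t)"
    using weakly_mixing_all_orders_approx_pairs[OF wm, where \<rho> = "\<lambda>t. r (fst t)"
        and a = "\<lambda>t. fst (snd t)" and b = "\<lambda>t. snd (snd t)"] by metis
  define G where "G i = (\<lambda>(a, b). x (i, a, b)) ` (FA i \<times> FB i)" for i
  show thesis
  proof (rule that[of n G])
    fix i assume "i < k"
    have xi: "dist a (x (i, a, b)) < r i \<and> dist b (g n (x (i, a, b))) < r i"
      if "(a, b) \<in> FA i \<times> FB i" for a b
      using x[of "(i, a, b)"] that \<open>i < k\<close> by (simp add: T_def)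
    have "hausdorff_close (r i) (FA i) (G i)"
      unfolding G_def using FA[OF \<open>i < k\<close>] FB[OF \<open>i < k\<close>] xi
      by (intro hausdorff_close_image[where p = fst]) auto
    then have A: "hausdorff_close (e i) (A i) (G i)"
      using hausdorff_close_trans FA[OF \<open>i < k\<close>] by (fastforce simp: r_def)
    have "g n ` G i = (\<lambda>(a, b). g n (x (i, a, b))) ` (FA i \<times> FB i)"
      by (auto simp: G_def image_iff)
    moreover have "hausdorff_close (r i) (FB i) ((\<lambda>(a, b). g n (x (i, a, b))) ` (FA i \<times> FB i))"
      using FA[OF \<open>i < k\<close>] FB[OF \<open>i < k\<close>] xi
      by (intro hausdorff_close_image[where p = snd]) auto
    ultimately have B: "hausdorff_close (e i) (B i) (g n ` G i)"
      using hausdorff_close_trans FB[OF \<open>i < k\<close>] by (fastforce simp: r_def)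
    show "finite (G i) \<and> G i \<noteq> {} \<and> hausdorff_close (e i) (A i) (G i) \<and> hausdorff_close (e i) (B i) (g n ` G i)"
      using FA[OF \<open>i < k\<close>] FB[OF \<open>i < k\<close>] A B by (simp add: G_def)
  qed (rule \<open>n \<ge> 1\<close>)
qed

subsection \<open>Weak mixing of the induced system\<close>

lemma finite_hausdorff_open_members:
  assumes "\<And>i. i < k \<Longrightarrow> finite_hausdorff_open \<Psi> (\<U> i) \<and> \<U> i \<noteq> {}"
  obtains A e where "\<And>i. i < k \<Longrightarrow> A i \<in> \<U> i \<and> e i > 0 \<and>
      (\<forall>G. finite G \<longrightarrow> G \<noteq> {} \<longrightarrow> hausdorff_close (e i) (A i) G \<longrightarrow> G \<in> \<U> i)"
proof -
  have "\<forall>i<k. \<exists>A e. A \<in> \<U> i \<and> e > 0 \<and>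
      (\<forall>G. finite G \<longrightarrow> G \<noteq> {} \<longrightarrow> hausdorff_close e A G \<longrightarrow> G \<in> \<U> i)"
    using assms unfolding finite_hausdorff_open_def by blast
  then show thesis using that by metis
qed

lemma weakly_mixing_order_induced:
  fixes g :: "nat \<Rightarrow> 'a::metric_space \<Rightarrow> 'a"
  assumes wm: "weakly_mixing_all_orders euclidean g"
    and compact: "\<And>A. A \<in> \<Psi> \<Longrightarrow> A \<noteq> {} \<and> compact A"
    and opens: "\<And>W. openin \<Delta> W \<Longrightarrow> finite_hausdorff_open \<Psi> W"
  shows "weakly_mixing_order \<Delta> (\<lambda>n A. g n ` A) k"
  unfolding weakly_mixing_order_def
proof (intro allI impI)
  fix \<U> \<V> :: "nat \<Rightarrow> 'a set set"
  assume UV: "\<forall>i<k. openin \<Delta> (\<U> i) \<and> \<U> i \<noteq> {} \<and> openin \<Delta> (\<V> i) \<and> \<V> i \<noteq> {}"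
  have hU: "finite_hausdorff_open \<Psi> (\<U> i) \<and> \<U> i \<noteq> {}"
    and hV: "finite_hausdorff_open \<Psi> (\<V> i) \<and> \<V> i \<noteq> {}" if "i < k" for i
    using UV opens that by simp_all
  obtain A eA where A: "\<And>i. i < k \<Longrightarrow> A i \<in> \<U> i \<and> eA i > 0 \<and>
      (\<forall>G. finite G \<longrightarrow> G \<noteq> {} \<longrightarrow> hausdorff_close (eA i) (A i) G \<longrightarrow> G \<in> \<U> i)"
    using finite_hausdorff_open_members[of k \<Psi> \<U>, OF hU] by metis
  obtain B eB where B: "\<And>i. i < k \<Longrightarrow> B i \<in> \<V> i \<and> eB i > 0 \<and>
      (\<forall>G. finite G \<longrightarrow> G \<noteq> {} \<longrightarrow> hausdorff_close (eB i) (B i) G \<longrightarrow> G \<in> \<V> i)"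
    using finite_hausdorff_open_members[of k \<Psi> \<V>, OF hV] by metis
  have "A i \<in> \<Psi> \<and> B i \<in> \<Psi>" if "i < k" for i
    using A[OF that] B[OF that] hU[OF that] hV[OF that] unfolding finite_hausdorff_open_def by blast
  then have AB: "compact (A i) \<and> A i \<noteq> {} \<and> compact (B i) \<and> B i \<noteq> {} \<and> min (eA i) (eB i) > 0"
    if "i < k" for i
    using compact A B that by simp
  obtain n G where "n \<ge> 1" and G: "\<And>i. i < k \<Longrightarrow> finite (G i) \<and> G i \<noteq> {} \<and>
      hausdorff_close (min (eA i) (eB i)) (A i) (G i) \<and>
      hausdorff_close (min (eA i) (eB i)) (B i) (g n ` G i)"
    using weakly_mixing_all_orders_hausdorff_approx[of g k A B "\<lambda>i. min (eA i) (eB i)", OF wm AB]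
    by metis
  have "G i \<in> \<U> i \<and> g n ` G i \<in> \<V> i" if "i < k" for i
    using A[OF that] B[OF that] G[OF that] hausdorff_close_mono
    by (metis finite_imageI image_is_empty min.cobounded1 min.cobounded2)
  then show "\<exists>n\<ge>1. \<forall>i<k. (\<lambda>A. g n ` A) ` \<U> i \<inter> \<V> i \<noteq> {}"
    using \<open>n \<ge> 1\<close> by blast
qed

lemma weakly_mixing_order_from_induced:
  fixes g :: "nat \<Rightarrow> 'a::topological_space \<Rightarrow> 'a"
  assumes wm: "weakly_mixing_order \<Delta> (\<lambda>n A. g n ` A) k"
    and singleton: "\<And>x. {x} \<in> \<Psi>"
    and basis: "topological_basis \<beta>"
    and miss_open: "\<And>W. W \<in> \<beta> \<Longrightarrow> openin \<Delta> (miss_set \<Psi> W)"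
    and hit_open: "\<And>V. open V \<Longrightarrow> openin \<Delta> (hit_set \<Psi> V)"
  shows "weakly_mixing_order euclidean g k"
  unfolding weakly_mixing_order_def
proof (intro allI impI)
  fix U V :: "nat \<Rightarrow> 'a set"
  assume UV: "\<forall>i<k. openin euclidean (U i) \<and> U i \<noteq> {} \<and> openin euclidean (V i) \<and> V i \<noteq> {}"
  have "\<exists>W. W \<in> \<beta> \<and> W \<noteq> {} \<and> W \<subseteq> U i" if i: "i < k" for i
  proof -
    obtain x where x: "x \<in> U i" using UV i by blast
    have "open (U i)" using UV i by simp
    then obtain W where "W \<in> \<beta>" "x \<in> W" "W \<subseteq> U i" using topological_basisE[OF basis _ x] by blast
    then show ?thesis by blast
  qed
  then obtain W where W: "\<And>i. i < k \<Longrightarrow> W i \<in> \<beta> \<and> W i \<noteq> {} \<and> W i \<subseteq> U i" by metis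
  have nonempty: "miss_set \<Psi> (W i) \<noteq> {} \<and> hit_set \<Psi> (V i) \<noteq> {}" if i: "i < k" for i
  proof -
    obtain x y where "x \<in> W i" "y \<in> V i" using W[OF i] UV i by blast
    then have "{x} \<in> miss_set \<Psi> (W i)" "{y} \<in> hit_set \<Psi> (V i)"
      using singleton by (auto simp: miss_set_def hit_set_def)
    then show ?thesis by blast
  qed
  have opens: "openin \<Delta> (miss_set \<Psi> (W i)) \<and> miss_set \<Psi> (W i) \<noteq> {} \<and>
      openin \<Delta> (hit_set \<Psi> (V i)) \<and> hit_set \<Psi> (V i) \<noteq> {}" if i: "i < k" for i
    using W[OF i] miss_open hit_open nonempty[OF i] UV i by simp
  obtain n where "n \<ge> 1"
    and n: "\<forall>i<k. (\<lambda>A. g n ` A) ` miss_set \<Psi> (W i) \<inter> hit_set \<Psi> (V i) \<noteq> {}"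
    using weakly_mixing_orderD[of \<Delta> _ k "\<lambda>i. miss_set \<Psi> (W i)" "\<lambda>i. hit_set \<Psi> (V i)", OF wm opens]
    by blast
  have "g n ` U i \<inter> V i \<noteq> {}" if i: "i < k" for i
  proof -
    obtain A where "A \<in> miss_set \<Psi> (W i)" "g n ` A \<in> hit_set \<Psi> (V i)" using n i by blast
    then have "A \<subseteq> W i" "g n ` A \<inter> V i \<noteq> {}" by (simp_all add: miss_set_def hit_set_def)
    then show ?thesis using W[OF i] by blast
  qed
  then show "\<exists>n\<ge>1. \<forall>i<k. g n ` U i \<inter> V i \<noteq> {}" using \<open>n \<ge> 1\<close> by blast
qed

theorem mainTheorem5:
  fixes f :: "nat \<Rightarrow> 'a::metric_space \<Rightarrow> 'a"
    and \<Psi> :: "'a set set"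
    and \<Delta> :: "'a set topology"
    and \<beta> :: "'a set set"
  assumes "compact (UNIV :: 'a set)"
    and "\<And>n. n \<ge> 1 \<Longrightarrow> continuous_on UNIV (f n)"
    and "\<And>A. A \<in> \<Psi> \<Longrightarrow> A \<noteq> {} \<and> compact A"
    and "\<And>A. A \<noteq> {} \<Longrightarrow> finite A \<Longrightarrow> A \<in> \<Psi>"
    and "\<And>k A. A \<in> \<Psi> \<Longrightarrow> omega f k ` A \<in> \<Psi>"
    and "admissible_topology f \<Psi> \<Delta>"
    and "topological_basis \<beta>"
    and "\<And>U. U \<in> \<beta> \<Longrightarrow> openin \<Delta> (miss_set \<Psi> U)"
  shows "weakly_mixing_all_orders euclidean (omega f) \<longleftrightarrow>
         weakly_mixing_all_orders \<Delta> (\<lambda>n A. omega f n ` A)"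
proof -
  obtain far \<E> where closed: "\<forall>E\<in>\<E>. closed E" and \<Delta>: "\<Delta> = hit_miss_topology far \<Psi> \<E>"
    using assms(6) unfolding admissible_topology_def by blast
  have compact: "\<And>A. A \<in> \<Psi> \<Longrightarrow> compact A" using assms(3) by blast
  have opens: "finite_hausdorff_open \<Psi> W" if "openin \<Delta> W" for W
    using finite_hausdorff_open_hit_miss_topology[where far = far, OF assms(4) compact closed] that
    unfolding \<Delta> by blast
  have hit_open: "openin \<Delta> (hit_set \<Psi> V)" if "open V" for V
    using that unfolding \<Delta> by (rule openin_hit_set_hit_miss_topology)
  have singleton: "\<And>x. {x} \<in> \<Psi>" using assms(4) by simp
  have "weakly_mixing_order \<Delta> (\<lambda>n A. omega f n ` A) k"
    if "weakly_mixing_all_orders euclidean (omega f)" for k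
    using that assms(3) opens by (rule weakly_mixing_order_induced)
  moreover have "weakly_mixing_order euclidean (omega f) k"
    if "weakly_mixing_order \<Delta> (\<lambda>n A. omega f n ` A) k" for k
    using that singleton assms(7,8) hit_open by (rule weakly_mixing_order_from_induced)
  ultimately show ?thesis unfolding weakly_mixing_all_orders_def by blast
qed

end
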